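(* Let $L\ge2$. Let $\mathcal{M}^*=(m_1^*,\dots,m_L^* )$ be a route with $m_1^*=1$ such that, for each $1\le k<L$, there is a unique nearest neighbor with respect to $(m_1^*,\dots,m_k^* )$ and $m_{k+1}^*$ is that nearest neighbor. Then every route $\mathcal{M}'=(1,m_2,\dots,m_L)$ of the same length $L$ satisfies $$R_{\mathrm{DF}}(\mathcal{M}^* )\ge R_{\mathrm{DF}}(\mathcal{M}').$$
   Context: Network: a finite set of nodes $\mathcal{S}=\{1,2,\dots,D\}$, $D\ge 2$. Node $1$ is the source and node $D$ is the destination. Received powers: for distinct nodes $i,t$, the power received at $t$ from $i$ is a positive real number $P_{it}$. All receivers have the same noise power $N>0$. Routes: a route is an ordered tuple of distinct nodes $\mathcal{M}=(m_1,\dots,m_L)$ with $m_1=1$ and $L\ge1$. DF with independent codewords: the reception rate of node $m_t$ ($2\le t\le L$) in route $\mathcal{M}$ is $$R_{m_t}(\mathcal{M})=\tfrac12\log\Big(1+N^{-1}\sum_{i=1}^{t-1}P_{m_i m_t}\Big).$$ The supported DF rate (for $L\ge2$) is $R_{\mathrm{DF}}(\mathcal{M})=\min_{2\le t\le L}R_{m_t}(\mathcal{M})$. Nearest neighbor: node $i\notin\mathcal{M}$ is a nearest neighbor with respect to route $\mathcal{M}$ iff $P_{mi}\ge P_{mj}$ for all $m\in\mathcal{M}$ and all $j\in\mathcal{S}\setminus(\mathcal{M}\cup\{i\})$. *)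

theory Defs
  imports Complex_Main
begin

text \<open>Nodes are the naturals 1..D; node 1 is the source. Received powers are
a function P :: nat => nat => real (P i t = power received at t from i), noise N.
A route is a list of nodes (index 0 is m_1).\<close>

definition nodes :: "nat \<Rightarrow> nat set" where
  "nodes D = {1..D}"

definition is_route :: "nat \<Rightarrow> nat list \<Rightarrow> bool" where
  "is_route D M \<longleftrightarrow> M \<noteq> [] \<and> hd M = 1 \<and> distinct M \<and> set M \<subseteq> nodes D"

text \<open>Reception rate of the node at (0-based) position t of route M, t >= 1.\<close>
definition rx_rate :: "(nat \<Rightarrow> nat \<Rightarrow> real) \<Rightarrow> real \<Rightarrow> nat list \<Rightarrow> nat \<Rightarrow> real" where
  "rx_rate P N M t = (1/2) * log 2 (1 + (\<Sum>i<t. P (M ! i) (M ! t)) / N)"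

definition R_DF :: "(nat \<Rightarrow> nat \<Rightarrow> real) \<Rightarrow> real \<Rightarrow> nat list \<Rightarrow> real" where
  "R_DF P N M = Min ((rx_rate P N M) ` {1..<length M})"

definition nearest_neighbor ::
  "nat \<Rightarrow> (nat \<Rightarrow> nat \<Rightarrow> real) \<Rightarrow> nat list \<Rightarrow> nat \<Rightarrow> bool" where
  "nearest_neighbor D P M i \<longleftrightarrow> i \<in> nodes D \<and> i \<notin> set M \<and>
     (\<forall>m\<in>set M. \<forall>j\<in>nodes D - (set M \<union> {i}). P m i \<ge> P m j)"

end

theory Submission
  imports Defs
begin

(* Fix a position t of the greedy route M* and let S be its first t nodes.
   Any competing route M' of the same length has t+1 > |S| distinct first nodes,
   so it has a first position t' <= t whose node y lies outside S; all earlier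
   nodes of M' lie in S.  Hence the power received at y along M' is at most the
   power S sends to y, which is at most the power S sends to its nearest
   neighbour M*!t, the power received at position t of M*.  Since the rate is
   monotone in the received power, every rate of M* dominates some rate of M',
   and so the minimal rate of M* dominates the minimal rate of M'. *)

definition received_power :: "(nat \<Rightarrow> nat \<Rightarrow> real) \<Rightarrow> nat list \<Rightarrow> nat \<Rightarrow> real" where
  "received_power P M t = (\<Sum>i<t. P (M ! i) (M ! t))"

lemma sum_prefix_positions:
  assumes "distinct xs" "t \<le> length xs"
  shows "(\<Sum>i<t. f (xs ! i)) = (\<Sum>s\<in>set (take t xs). f s)"
proof -
  have img: "set (take t xs) = (\<lambda>i. xs ! i) ` {..<t}"
    using nth_image[OF assms(2)] by (simp add: lessThan_atLeast0)
  have "inj_on (\<lambda>i. xs ! i) {..<t}"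
    using assms by (auto simp: inj_on_def nth_eq_iff_index_eq)
  then show ?thesis
    unfolding img by (simp add: sum.reindex)
qed

lemma received_power_set:
  assumes "distinct M" "t < length M"
  shows "received_power P M t = (\<Sum>s\<in>set (take t M). P s (M ! t))"
  unfolding received_power_def
  using sum_prefix_positions[OF assms(1), of t "\<lambda>s. P s (M ! t)"] assms(2) by simp

lemma rx_rate_received_power:
  "rx_rate P N M t = (1/2) * log 2 (1 + received_power P M t / N)"
  by (simp add: rx_rate_def received_power_def)

lemma rate_mono:
  fixes a b N :: real
  assumes "N > 0" "0 \<le> a" "a \<le> b"
  shows "(1/2) * log 2 (1 + a / N) \<le> (1/2) * log 2 (1 + b / N)"
proof -
  have "0 < 1 + a / N" using assms by (simp add: add_pos_nonneg)
  moreover have "1 + a / N \<le> 1 + b / N" using assms by (simp add: divide_right_mono)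
  ultimately show ?thesis by simp
qed

lemma first_new_position:
  assumes "finite S" "distinct xs" "card S < length xs"
  obtains t' where "t' \<le> card S" "xs ! t' \<notin> S" "set (take t' xs) \<subseteq> S"
proof -
  have "\<not> set (take (Suc (card S)) xs) \<subseteq> S"
  proof
    assume "set (take (Suc (card S)) xs) \<subseteq> S"
    from card_mono[OF assms(1) this] show False
      using assms(2,3) by (simp add: distinct_card)
  qed
  then obtain x where "x \<in> set (take (Suc (card S)) xs)" "x \<notin> S" by blast
  then obtain k where k: "k \<le> card S" "xs ! k \<notin> S"
    using assms(3) by (auto simp: in_set_conv_nth less_Suc_eq_le)
  define t' where "t' = (LEAST k. xs ! k \<notin> S)"
  have "xs ! t' \<notin> S"
    unfolding t'_def by (rule LeastI) (rule k(2))
  moreover have "t' \<le> k"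
    unfolding t'_def by (rule Least_le) (rule k(2))
  moreover have "set (take t' xs) \<subseteq> S"
    unfolding t'_def using not_less_Least by (fastforce simp: in_set_conv_nth)
  ultimately show ?thesis using that k(1) by (meson order_trans)
qed

lemma nearest_neighbor_power_bound:
  assumes "nearest_neighbor D P M x" "y \<in> nodes D" "y \<notin> set M"
  shows "(\<Sum>s\<in>set M. P s y) \<le> (\<Sum>s\<in>set M. P s x)"
proof (cases "y = x")
  case False
  then show ?thesis
    using assms unfolding nearest_neighbor_def by (intro sum_mono) auto
qed simp

lemma greedy_position_dominates:
  assumes "N > 0"
    and pos: "\<And>i t. i \<in> nodes D \<Longrightarrow> t \<in> nodes D \<Longrightarrow> i \<noteq> t \<Longrightarrow> P i t > 0"
    and route: "is_route D M" and t: "1 \<le> t" "t < length M"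
    and nn: "nearest_neighbor D P (take t M) (M ! t)"
    and route': "is_route D M'" and len': "t < length M'"
  obtains t' where "1 \<le> t'" "t' \<le> t" "rx_rate P N M' t' \<le> rx_rate P N M t"
proof -
  define S where "S = set (take t M)"
  have dist: "distinct M" "distinct M'"
    using route route' by (auto simp: is_route_def)
  have S_nodes: "S \<subseteq> nodes D"
    using route unfolding S_def is_route_def by (meson set_take_subset order_trans)
  have "card S = t"
    unfolding S_def using dist(1) t by (simp add: distinct_card)
  then obtain t' where t': "t' \<le> t" "M' ! t' \<notin> S" "set (take t' M') \<subseteq> S"
    using first_new_position[of S M'] dist(2) len' unfolding S_def by auto
  define y where "y = M' ! t'"
  have y: "y \<in> nodes D" "y \<notin> S"
    using route' t' len' unfolding y_def is_route_def by auto
  have "M ! 0 \<in> S"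
    unfolding S_def using t by (auto simp: in_set_conv_nth intro!: exI[of _ 0])
  moreover have "M' ! 0 = M ! 0"
    using route route' unfolding is_route_def by (auto simp: hd_conv_nth)
  ultimately have "t' \<noteq> 0"
    using t'(2) by metis
  have nonneg: "0 \<le> P s y" if "s \<in> S" for s
    using pos[of s y] that y S_nodes by fastforce
  have power': "received_power P M' t' = (\<Sum>s\<in>set (take t' M'). P s y)"
    using received_power_set[OF dist(2)] t'(1) len' unfolding y_def by simp
  also have "\<dots> \<le> (\<Sum>s\<in>S. P s y)"
    using t'(3) nonneg by (intro sum_mono2) (auto simp: S_def)
  also have "\<dots> \<le> (\<Sum>s\<in>S. P s (M ! t))"
    using nearest_neighbor_power_bound[OF nn] y unfolding S_def by simp
  also have "\<dots> = received_power P M t"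
    using received_power_set[OF dist(1) t(2)] unfolding S_def by simp
  finally have le: "received_power P M' t' \<le> received_power P M t" .
  have "0 \<le> received_power P M' t'"
    unfolding power' using t'(3) nonneg by (intro sum_nonneg) auto
  with le have "rx_rate P N M' t' \<le> rx_rate P N M t"
    unfolding rx_rate_received_power using \<open>N > 0\<close> by (intro rate_mono)
  with \<open>t' \<noteq> 0\<close> t'(1) show ?thesis using that by (simp add: Suc_le_eq)
qed

lemma R_DF_le_if_dominated:
  assumes "2 \<le> length M"
    and dom: "\<And>t. t \<in> {1..<length M} \<Longrightarrow>
                \<exists>t'\<in>{1..<length M'}. rx_rate P N M' t' \<le> rx_rate P N M t"
  shows "R_DF P N M' \<le> R_DF P N M"
  unfolding R_DF_def
proof (rule Min.boundedI)
  show "finite (rx_rate P N M ` {1..<length M})" "rx_rate P N M ` {1..<length M} \<noteq> {}"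
    using assms(1) by auto
next
  fix a assume "a \<in> rx_rate P N M ` {1..<length M}"
  then obtain t where t: "t \<in> {1..<length M}" "a = rx_rate P N M t" by auto
  from dom[OF t(1)] obtain t' where t': "t' \<in> {1..<length M'}" "rx_rate P N M' t' \<le> a"
    using t(2) by auto
  then have "Min (rx_rate P N M' ` {1..<length M'}) \<le> rx_rate P N M' t'"
    by (intro Min_le) auto
  with t' show "Min (rx_rate P N M' ` {1..<length M'}) \<le> a" by linarith
qed

theorem lemma3:
  fixes D L :: nat and P :: "nat \<Rightarrow> nat \<Rightarrow> real" and N :: real
    and Mstar M' :: "nat list"
  assumes "D \<ge> 2"
    and "N > 0"
    and "\<And>i t. i \<in> nodes D \<Longrightarrow> t \<in> nodes D \<Longrightarrow> i \<noteq> t \<Longrightarrow> P i t > 0"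
    and "L \<ge> 2"
    and "is_route D Mstar" and "length Mstar = L"
    and "\<And>k. 1 \<le> k \<Longrightarrow> k < L \<Longrightarrow>
           (\<forall>i. nearest_neighbor D P (take k Mstar) i \<longleftrightarrow> i = Mstar ! k)"
    and "is_route D M'" and "length M' = L"
  shows "R_DF P N Mstar \<ge> R_DF P N M'"
proof (rule R_DF_le_if_dominated)
  show "2 \<le> length Mstar" using assms(4,6) by simp
next
  fix t assume t: "t \<in> {1..<length Mstar}"
  have nn: "nearest_neighbor D P (take t Mstar) (Mstar ! t)"
    using assms(6,7) t by auto
  obtain t' where "1 \<le> t'" "t' \<le> t" "rx_rate P N M' t' \<le> rx_rate P N Mstar t"
    by (rule greedy_position_dominates[where M = Mstar and M' = M'])
      (use assms(2,3,5,6,8,9) nn t in auto)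
  then show "\<exists>t'\<in>{1..<length M'}. rx_rate P N M' t' \<le> rx_rate P N Mstar t"
    using t assms(6,9) by (intro bexI[of _ t']) auto
qed

end
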